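(* Let $c<-14$ and let $u\in\mathbb{R}^3$ with $\kappa(u)=c$. Then there exists $\gamma\in\Gamma$ such that $u'=\gamma u=(x',y',z')$ satisfies at least one of: (M) $u'\in\Omega_0^M$; (E) $-2\le \bar z(u')\le 2$, i.e. $-2\le -x'y'-z'\le 2$; ($\Sigma$) $x'=0$ or $y'=0$.
   Context: $\kappa(x,y,z)=-x^2-y^2+z^2+xyz-2$ on $\mathbb{R}^3$; for $u=(x,y,z)$ set $\bar z(u)=-xy-z$. $Q_x(x,y,z)=(yz-x,y,z)$, $Q_y(x,y,z)=(x,xz-y,z)$, $Q_z(x,y,z)=(x,y,-xy-z)$. $\Gamma$ is the group generated by $Q_x,Q_y,Q_z$, the sign changes $(x,y,z)\mapsto(-x,y,-z)$, $(x,-y,-z)$, $(-x,-y,z)$ and the transposition $(x,y,z)\mapsto(y,x,z)$; all preserve $\kappa$. $\Omega_0^M=\{(x,y,z): z<-2,\ xy+z>2\}$. *)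

theory Defs
  imports Complex_Main
begin

type_synonym point = "real \<times> real \<times> real"

definition kappa :: "point \<Rightarrow> real" where
  "kappa u = (case u of (x, y, z) \<Rightarrow> z^2 - x^2 - y^2 + x*y*z - 2)"

definition zbar :: "point \<Rightarrow> real" where
  "zbar u = (case u of (x, y, z) \<Rightarrow> - x*y - z)"

definition Qx :: "point \<Rightarrow> point" where
  "Qx u = (case u of (x, y, z) \<Rightarrow> (y*z - x, y, z))"

definition Qy :: "point \<Rightarrow> point" where
  "Qy u = (case u of (x, y, z) \<Rightarrow> (x, x*z - y, z))"

definition Qz :: "point \<Rightarrow> point" where
  "Qz u = (case u of (x, y, z) \<Rightarrow> (x, y, - x*y - z))"

definition S1 :: "point \<Rightarrow> point" where
  "S1 u = (case u of (x, y, z) \<Rightarrow> (-x, y, -z))"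

definition S2 :: "point \<Rightarrow> point" where
  "S2 u = (case u of (x, y, z) \<Rightarrow> (x, -y, -z))"

definition S3 :: "point \<Rightarrow> point" where
  "S3 u = (case u of (x, y, z) \<Rightarrow> (-x, -y, z))"

definition Tr :: "point \<Rightarrow> point" where
  "Tr u = (case u of (x, y, z) \<Rightarrow> (y, x, z))"

definition generators :: "(point \<Rightarrow> point) set" where
  "generators = {Qx, Qy, Qz, S1, S2, S3, Tr}"

inductive_set Gamma :: "(point \<Rightarrow> point) set" where
  Gamma_id: "id \<in> Gamma"
| Gamma_gen: "g \<in> generators \<Longrightarrow> g \<in> Gamma"
| Gamma_comp: "f \<in> Gamma \<Longrightarrow> g \<in> Gamma \<Longrightarrow> f \<circ> g \<in> Gamma"
| Gamma_inv: "f \<in> Gamma \<Longrightarrow> inv f \<in> Gamma"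

definition Omega0M :: "point set" where
  "Omega0M = {(x, y, z). z < -2 \<and> x*y + z > 2}"

end

theory Submission
  imports Defs
begin

text \<open>After sign changes we may assume \<open>x, y \<ge> 0\<close>, and after possibly applying \<open>Qz\<close> either
  the point is already good or \<open>z > 2\<close>. For \<open>0 < y \<le> x\<close> and \<open>z > 2\<close> the Vieta move \<open>Qx\<close>
  replaces \<open>x\<close> by \<open>yz - x\<close>; the hypothesis \<open>c = \<kappa>(u) < -14\<close> forces \<open>x (2x - yz) \<ge> 2 - c\<close> and
  \<open>x - y > 4\<close>, so \<open>x\<^sup>2\<close> drops by at least \<open>2y(2 - c)/x\<close>. With \<open>y\<close> fixed this bound is
  uniform, so finitely many moves bring \<open>|x|\<close> down to \<open>|y|\<close>; the gap \<open>x - y > 4\<close> then shows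
  that \<open>max |x| |y|\<close> has dropped by more than 4, and induction on that maximum finishes.\<close>

lemma uniform_descent_induct:
  fixes f :: "'a \<Rightarrow> real"
  assumes "d > 0" and nonneg: "\<And>a. f a \<ge> 0"
    and step: "\<And>a. (\<And>b. f b \<le> f a - d \<Longrightarrow> P b) \<Longrightarrow> P a"
  shows "P a"
proof (induction a rule: measure_induct_rule[where f = "\<lambda>a. nat \<lceil>f a / d\<rceil>"])
  case (less a)
  show ?case
  proof (rule step)
    fix b assume "f b \<le> f a - d"
    then have "f b / d \<le> f a / d - 1" using \<open>d > 0\<close> by (simp add: field_simps)
    moreover have "0 \<le> f b / d" using nonneg[of b] \<open>d > 0\<close> by simp
    ultimately have "nat \<lceil>f b / d\<rceil> < nat \<lceil>f a / d\<rceil>" by linarith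
    then show "P b" by (rule less)
  qed
qed

lemma generators_in_Gamma:
  "Qx \<in> Gamma" "Qy \<in> Gamma" "Qz \<in> Gamma" "S1 \<in> Gamma" "S2 \<in> Gamma" "S3 \<in> Gamma" "Tr \<in> Gamma"
  by (auto intro: Gamma_gen simp: generators_def)

lemma generator_involution: "g \<in> generators \<Longrightarrow> g \<circ> g = id"
  by (auto simp: generators_def fun_eq_iff Qx_def Qy_def Qz_def S1_def S2_def S3_def Tr_def
      split: prod.splits)

lemma bij_Gamma: "g \<in> Gamma \<Longrightarrow> bij g"
proof (induction g rule: Gamma.induct)
  case (Gamma_gen g)
  then show ?case using generator_involution o_bij by metis
qed (blast intro: bij_id bij_comp bij_imp_bij_inv)+

lemma kappa_generator: "g \<in> generators \<Longrightarrow> kappa (g u) = kappa u"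
  by (cases u) (auto simp: generators_def kappa_def Qx_def Qy_def Qz_def S1_def S2_def S3_def Tr_def
      algebra_simps power2_eq_square)

lemma kappa_Gamma: "g \<in> Gamma \<Longrightarrow> kappa (g u) = kappa u"
proof (induction g arbitrary: u rule: Gamma.induct)
  case (Gamma_inv f)
  have "kappa (inv f u) = kappa (f (inv f u))" using Gamma_inv.IH by simp
  also have "f (inv f u) = u" using bij_Gamma[OF Gamma_inv.hyps] by (simp add: bij_is_surj surj_f_inv_f)
  finally show ?case .
qed (simp_all add: kappa_generator)

definition good :: "point \<Rightarrow> bool" where
  "good u = (case u of (x, y, z) \<Rightarrow>
     u \<in> Omega0M \<or> (-2 \<le> zbar u \<and> zbar u \<le> 2) \<or> x = 0 \<or> y = 0)"

definition reducible :: "point \<Rightarrow> bool" where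
  "reducible u = (\<exists>\<gamma>\<in>Gamma. good (\<gamma> u))"

lemma reducible_if_good: "good u \<Longrightarrow> reducible u"
  unfolding reducible_def using Gamma_id by (metis id_apply)

lemma reducible_if_reducible_image: "g \<in> Gamma \<Longrightarrow> reducible (g u) \<Longrightarrow> reducible u"
  unfolding reducible_def by (metis Gamma_comp comp_apply)

lemma abs_signs_in_Gamma: "\<exists>g\<in>Gamma. \<exists>z'. g (x, y, z) = (\<bar>x\<bar>, \<bar>y\<bar>, z')"
proof -
  consider "x \<ge> 0" "y \<ge> 0" | "x < 0" "y < 0" | "x < 0" "y \<ge> 0" | "x \<ge> 0" "y < 0"
    by linarith
  then show ?thesis
  proof cases
    case 1 then show ?thesis using Gamma_id by (intro bexI[of _ id]) auto
  next
    case 2 then show ?thesis using generators_in_Gamma by (intro bexI[of _ S3]) (auto simp: S3_def)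
  next
    case 3 then show ?thesis using generators_in_Gamma by (intro bexI[of _ S1]) (auto simp: S1_def)
  next
    case 4 then show ?thesis using generators_in_Gamma by (intro bexI[of _ S2]) (auto simp: S2_def)
  qed
qed

lemma reducible_or_positive_normal_form:
  "reducible (x, y, z) \<or> (\<exists>g\<in>Gamma. \<exists>z'. g (x, y, z) = (\<bar>x\<bar>, \<bar>y\<bar>, z') \<and> z' > 2)"
proof -
  obtain g z' where g: "g \<in> Gamma" "g (x, y, z) = (\<bar>x\<bar>, \<bar>y\<bar>, z')"
    using abs_signs_in_Gamma by blast
  define w where "w = - \<bar>x\<bar> * \<bar>y\<bar> - z'"
  have Qz_g: "Qz \<circ> g \<in> Gamma" "(Qz \<circ> g) (x, y, z) = (\<bar>x\<bar>, \<bar>y\<bar>, w)"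
    using g generators_in_Gamma by (auto intro: Gamma_comp simp: Qz_def w_def)
  consider "z' > 2" | "\<bar>z'\<bar> \<le> 2" | "z' < -2" "w > 2" | "z' < -2" "w \<le> 2"
    by linarith
  then show ?thesis
  proof cases
    case 1 then show ?thesis using g by blast
  next
    case 2
    then have "good (\<bar>x\<bar>, \<bar>y\<bar>, w)" by (auto simp: good_def zbar_def w_def)
    then show ?thesis using Qz_g reducible_def by metis
  next
    case 3 then show ?thesis using Qz_g by blast
  next
    case 4
    \<comment> \<open>if \<open>w < -2\<close> then \<open>|x| |y| + z' = -w > 2\<close>, so the point lies in \<open>Omega0M\<close>\<close>
    then have "good (\<bar>x\<bar>, \<bar>y\<bar>, z')" by (auto simp: good_def zbar_def Omega0M_def w_def)
    then show ?thesis using g reducible_def by metis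
  qed
qed

lemma kappa_Qx_bounds:
  fixes x y z c :: real
  assumes c: "c < -14" and k: "kappa (x, y, z) = c" and "0 < y" "y \<le> x" "2 < z"
  shows "\<bar>y*z - x\<bar> < x" "2*y*(2 - c)/x \<le> x^2 - (y*z - x)^2" "y + 4 < x"
proof -
  have x: "x > 0" using assms by linarith
  have z2: "4 < z^2" using power_strict_mono[of 2 z 2] \<open>2 < z\<close> by simp
  have "y^2 \<le> x^2" using assms by (simp add: power_mono)
  then have "2 - c \<le> x * (2*x - y*z)"
    using k z2 by (simp add: kappa_def algebra_simps power2_eq_square)
  then have lb: "(2 - c)/x \<le> 2*x - y*z" using x by (simp add: field_simps)
  have yz: "2*y \<le> y*z" "0 < y*z" using assms by simp_all
  have "0 < (2 - c)/x" using x c by simp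
  then show "\<bar>y*z - x\<bar> < x" using lb yz by linarith
  have "2*y*(2 - c)/x = (2*y) * ((2 - c)/x)" by simp
  also have "\<dots> \<le> (y*z) * (2*x - y*z)"
    using mult_mono[OF yz(1) lb] yz(2) \<open>0 < (2 - c)/x\<close> by simp
  also have "\<dots> = x^2 - (y*z - x)^2" by (simp add: algebra_simps power2_eq_square)
  finally show "2*y*(2 - c)/x \<le> x^2 - (y*z - x)^2" .
  have "2*x*y < x*y*z" using x assms by simp
  then have "16 < (x - y)^2"
    using k c z2 by (simp add: kappa_def algebra_simps power2_eq_square)
  then have "4 < x - y" using \<open>y \<le> x\<close> power_less_imp_less_base[of 4 2 "x - y"] by simp
  then show "y + 4 < x" by simp
qed

lemma reducible_or_Qx_descent:
  assumes c: "c < -14" and k: "kappa (x, y, z) = c" and "y \<noteq> 0" and yx: "\<bar>y\<bar> \<le> \<bar>x\<bar>"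
  shows "reducible (x, y, z) \<or> \<bar>y\<bar> + 4 < \<bar>x\<bar> \<and>
    (\<exists>g\<in>Gamma. \<exists>x' z'. g (x, y, z) = (x', \<bar>y\<bar>, z') \<and> \<bar>x'\<bar> < \<bar>x\<bar>
       \<and> 2*\<bar>y\<bar>*(2 - c)/\<bar>x\<bar> \<le> x^2 - x'^2)"
  using reducible_or_positive_normal_form[of x y z]
proof
  assume "\<exists>g\<in>Gamma. \<exists>z'. g (x, y, z) = (\<bar>x\<bar>, \<bar>y\<bar>, z') \<and> z' > 2"
  then obtain g z' where g: "g \<in> Gamma" "g (x, y, z) = (\<bar>x\<bar>, \<bar>y\<bar>, z')" "z' > 2" by blast
  have "kappa (\<bar>x\<bar>, \<bar>y\<bar>, z') = c" using kappa_Gamma[OF g(1), of "(x, y, z)"] g(2) k by simp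
  note bounds = kappa_Qx_bounds[OF c this _ yx g(3)]
  have "Qx \<circ> g \<in> Gamma" "(Qx \<circ> g) (x, y, z) = (\<bar>y\<bar>*z' - \<bar>x\<bar>, \<bar>y\<bar>, z')"
    using g generators_in_Gamma by (auto intro: Gamma_comp simp: Qx_def)
  moreover have "\<bar>x\<bar>^2 = x^2" by simp
  ultimately show ?thesis using bounds \<open>y \<noteq> 0\<close>
    by (intro disjI2 conjI bexI[of _ "Qx \<circ> g"] exI) simp_all
qed simp

lemma reducible_if_second_coordinate_fixed:
  assumes c: "c < -14" and "0 < b" "0 < X"
    and small: "\<And>x y z. kappa (x, y, z) = c \<Longrightarrow> \<bar>x\<bar> \<le> b \<Longrightarrow> \<bar>y\<bar> \<le> b \<Longrightarrow> reducible (x, y, z)"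
    and "kappa u = c" "\<bar>fst (snd u)\<bar> = b" "\<bar>fst u\<bar> \<le> X"
  shows "reducible u"
proof -
  have d: "0 < 2*b*(2 - c)/X" using assms by simp
  from assms(5-7) show ?thesis
  proof (induction u rule: uniform_descent_induct[where f = "\<lambda>u. (fst u)^2", OF d zero_le_power2,
        case_names step])
    case (step u)
    obtain x y z where u: "u = (x, y, z)" by (cases u)
    have k: "kappa (x, y, z) = c" and y: "\<bar>y\<bar> = b" and x: "\<bar>x\<bar> \<le> X"
      using step.prems u by simp_all
    show ?case
    proof (cases "\<bar>x\<bar> \<le> b")
      case True
      then show ?thesis using small[OF k] y u by simp
    next
      case False
      then have "y \<noteq> 0" "\<bar>y\<bar> \<le> \<bar>x\<bar>" using \<open>0 < b\<close> y by auto
      from reducible_or_Qx_descent[OF c k this] show ?thesis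
      proof (elim disjE conjE bexE exE)
        fix g x' z'
        assume g: "g \<in> Gamma" "g (x, y, z) = (x', \<bar>y\<bar>, z')" "\<bar>x'\<bar> < \<bar>x\<bar>"
          "2*\<bar>y\<bar>*(2 - c)/\<bar>x\<bar> \<le> x^2 - x'^2"
        have "2*b*(2 - c)/X \<le> 2*b*(2 - c)/\<bar>x\<bar>"
          using x c \<open>0 < b\<close> False by (intro divide_left_mono) simp_all
        then have "x'^2 \<le> x^2 - 2*b*(2 - c)/X" using g(4) y by simp
        moreover have "kappa (x', \<bar>y\<bar>, z') = c" using kappa_Gamma[OF g(1), of "(x, y, z)"] g(2) k by simp
        moreover have "\<bar>x'\<bar> \<le> X" using g(3) x by simp
        ultimately have "reducible (g (x, y, z))"
          using step.IH[of "(x', \<bar>y\<bar>, z')"] g(2) y u by simp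
        then show ?thesis using reducible_if_reducible_image g(1) u by blast
      qed (simp add: u)
    qed
  qed
qed

lemma reducible_if_second_le_first:
  assumes c: "c < -14" and k: "kappa (x, y, z) = c" and yx: "\<bar>y\<bar> \<le> \<bar>x\<bar>"
    and smaller: "\<And>x' y' z'. kappa (x', y', z') = c \<Longrightarrow> max \<bar>x'\<bar> \<bar>y'\<bar> \<le> \<bar>x\<bar> - 4 \<Longrightarrow>
      reducible (x', y', z')"
  shows "reducible (x, y, z)"
proof (cases "y = 0")
  case True
  then show ?thesis by (intro reducible_if_good) (simp add: good_def zbar_def)
next
  case False
  from reducible_or_Qx_descent[OF c k False yx] show ?thesis
  proof (elim disjE conjE)
    assume gap: "\<bar>y\<bar> + 4 < \<bar>x\<bar>"
    have "\<And>x' y' z'. kappa (x', y', z') = c \<Longrightarrow> \<bar>x'\<bar> \<le> \<bar>y\<bar> \<Longrightarrow> \<bar>y'\<bar> \<le> \<bar>y\<bar> \<Longrightarrow>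
      reducible (x', y', z')"
      using smaller gap by force
    from reducible_if_second_coordinate_fixed[where u = "(x, y, z)" and b = "\<bar>y\<bar>" and X = "\<bar>x\<bar>", OF c _ _ this]
    show ?thesis using False gap k by simp
  qed
qed

lemma reducible_if_kappa_less_neg14:
  assumes c: "c < -14" and "kappa u = c"
  shows "reducible u"
  using \<open>kappa u = c\<close>
proof (induction u rule: uniform_descent_induct[where f = "\<lambda>(x, y, z). max \<bar>x\<bar> \<bar>y\<bar>" and d = 4,
      case_names pos nonneg step])
  case (step u)
  obtain x y z where u: "u = (x, y, z)" by (cases u)
  have smaller: "\<And>x' y' z'. kappa (x', y', z') = c \<Longrightarrow> max \<bar>x'\<bar> \<bar>y'\<bar> \<le> max \<bar>x\<bar> \<bar>y\<bar> - 4 \<Longrightarrow>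
      reducible (x', y', z')"
    using step.IH u by force
  show ?case
  proof (cases "\<bar>y\<bar> \<le> \<bar>x\<bar>")
    case True
    then show ?thesis using reducible_if_second_le_first[OF c _ True] smaller step.prems u
      by (simp add: max_def)
  next
    case False
    have "kappa (y, x, z) = c" using kappa_generator[of Tr u] step.prems u
      by (simp add: generators_def Tr_def)
    then have "reducible (Tr (x, y, z))"
      using reducible_if_second_le_first[OF c] smaller False by (simp add: Tr_def max_def)
    then show ?thesis using reducible_if_reducible_image generators_in_Gamma(7) u by blast
  qed
qed auto

theorem mainTheorem4:
  fixes c :: real and u :: point
  assumes "c < -14" and "kappa u = c"
  shows "\<exists>\<gamma>\<in>Gamma. \<exists>x' y' z'. \<gamma> u = (x', y', z') \<and>
           ((x', y', z') \<in> Omega0M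
            \<or> (-2 \<le> - x'*y' - z' \<and> - x'*y' - z' \<le> 2)
            \<or> x' = 0 \<or> y' = 0)"
proof -
  obtain \<gamma> where "\<gamma> \<in> Gamma" "good (\<gamma> u)"
    using reducible_if_kappa_less_neg14[OF assms] reducible_def by blast
  then show ?thesis by (cases "\<gamma> u") (auto simp: good_def zbar_def)
qed

end
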